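(* Let $G$ be a group with Property RD with respect to a length function $l$, and let $h\in G$ be any element (not necessarily of finite order). For $m\ge0$ let $n_m=|\{g\in C(h): l(g)=m\}|$, and assume $(n_m)$ does not grow polynomially: for every polynomial $P$ there are infinitely many $m$ with $n_m>P(m)$. Then every bounded trace $\tau:C^*_{\mathrm{red}}G\to\mathbb{C}$ satisfies $\tau(h)=0$.
   Context: A length function on $G$ is $l:G\to\mathbb{Z}_{\ge0}$ with $l(fg)\le l(f)+l(g)$, $l(g^{-1})=l(g)$, $l(e)=0$, and $l^{-1}(S)$ finite for finite $S$. $\|\sum c_g g\|_{H^s}^2=\sum|c_g|^2(1+l(g))^{2s}$, and $H^s(G)$ is the completion of $\mathbb{C}G$ in this norm. $G$ has Property RD with respect to $l$ if there are constants $C,s$ with $\|x\|_{C^*_{\mathrm{red}}G}\le C\|x\|_{H^s}$ for all $x\in\mathbb{C}G$. $C(h)$ is the conjugacy class of $h$. A trace is a bounded linear functional $\tau$ with $\tau(ab)=\tau(ba)$. *)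

theory Defs
  imports "HOL-Analysis.Analysis" "HOL-Computational_Algebra.Polynomial"
begin

text \<open>The group G is a type of class group_add; the group law is written +
 (not assumed commutative), the inverse of g is -g, the identity is 0.\<close>

definition length_function :: "('a::group_add \<Rightarrow> nat) \<Rightarrow> bool" where
  "length_function l \<longleftrightarrow>
     (\<forall>f g. l (f + g) \<le> l f + l g) \<and> (\<forall>g. l (- g) = l g) \<and> l 0 = 0 \<and>
     (\<forall>S. finite S \<longrightarrow> finite (l -` S))"

definition supp :: "('a \<Rightarrow> complex) \<Rightarrow> 'a set" where
  "supp x = {g. x g \<noteq> 0}"

definition groupring :: "('a \<Rightarrow> complex) set" where
  "groupring = {x. finite (supp x)}"

definition delta :: "'a \<Rightarrow> 'a \<Rightarrow> complex" where
  "delta h = (\<lambda>g. if g = h then 1 else 0)"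

definition conv :: "('a::group_add \<Rightarrow> complex) \<Rightarrow> ('a \<Rightarrow> complex) \<Rightarrow> 'a \<Rightarrow> complex" where
  "conv x y = (\<lambda>g. \<Sum>k\<in>supp x. x k * y (- k + g))"

definition l2 :: "('a \<Rightarrow> complex) set" where
  "l2 = {\<xi>. (\<lambda>g. (cmod (\<xi> g))\<^sup>2) summable_on UNIV}"

definition l2norm :: "('a \<Rightarrow> complex) \<Rightarrow> real" where
  "l2norm \<xi> = sqrt (\<Sum>\<^sub>\<infinity>g. (cmod (\<xi> g))\<^sup>2)"

definition red_norm :: "('a::group_add \<Rightarrow> complex) \<Rightarrow> real" where
  "red_norm x = Sup {l2norm (conv x \<xi>) | \<xi>. \<xi> \<in> l2 \<and> l2norm \<xi> \<le> 1}"

definition sobolev_norm :: "('a \<Rightarrow> nat) \<Rightarrow> real \<Rightarrow> ('a \<Rightarrow> complex) \<Rightarrow> real" where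
  "sobolev_norm l s x = sqrt (\<Sum>g\<in>supp x. (cmod (x g))\<^sup>2 * (1 + real (l g)) powr (2 * s))"

definition property_RD :: "('a::group_add \<Rightarrow> nat) \<Rightarrow> bool" where
  "property_RD l \<longleftrightarrow> (\<exists>C s. \<forall>x\<in>groupring. red_norm x \<le> C * sobolev_norm l s x)"

definition conj_class :: "'a::group_add \<Rightarrow> 'a set" where
  "conj_class h = {g + h + - g | g. True}"

text \<open>A bounded trace on the reduced C*-algebra, described by its restriction
 to the dense subalgebra CG: a linear functional, bounded for the reduced norm,
 with tau(ab) = tau(ba). Such functionals correspond exactly to bounded traces
 on the completion.\<close>
definition bounded_trace :: "(('a::group_add \<Rightarrow> complex) \<Rightarrow> complex) \<Rightarrow> bool" where
  "bounded_trace \<tau> \<longleftrightarrow>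
     (\<forall>x\<in>groupring. \<forall>y\<in>groupring. \<tau> (\<lambda>g. x g + y g) = \<tau> x + \<tau> y) \<and>
     (\<forall>c. \<forall>x\<in>groupring. \<tau> (\<lambda>g. c * x g) = c * \<tau> x) \<and>
     (\<exists>K. \<forall>x\<in>groupring. cmod (\<tau> x) \<le> K * red_norm x) \<and>
     (\<forall>x\<in>groupring. \<forall>y\<in>groupring. \<tau> (conv x y) = \<tau> (conv y x))"

end

theory Submission imports Defs begin

text \<open>A trace is constant on conjugacy classes, so for the finite set \<open>S\<close> of conjugates of \<open>h\<close>
  of length \<open>m\<close> its indicator \<open>\<chi>\<close> has \<open>\<tau>(\<chi>) = n\<^sub>m \<tau>(h)\<close>. Boundedness of \<open>\<tau>\<close> and Property RD give
  \<open>n\<^sub>m |\<tau>(h)| \<le> D \<parallel>\<chi>\<parallel>\<^sub>H\<^sub>s = D \<surd>n\<^sub>m (1 + m)\<^sup>s\<close>, hence \<open>n\<^sub>m \<le> (D / |\<tau>(h)|)\<^sup>2 (1 + m)\<^sup>2\<^sup>s\<close>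
  if \<open>\<tau>(h) \<noteq> 0\<close>: polynomial growth, contradicting the hypothesis.\<close>

lemma l2_left_translate:
  fixes \<xi> :: "'a::group_add \<Rightarrow> complex"
  assumes "\<xi> \<in> l2"
  shows "(\<lambda>g. (cmod (\<xi> (- k + g)))\<^sup>2) summable_on UNIV"
    and "(\<Sum>\<^sub>\<infinity>g. (cmod (\<xi> (- k + g)))\<^sup>2) = (\<Sum>\<^sub>\<infinity>g. (cmod (\<xi> g))\<^sup>2)"
proof -
  have bij: "bij_betw (\<lambda>g. - k + g) UNIV UNIV"
    by (rule bij_betwI[where g="\<lambda>g. k + g"]) (auto simp: add.assoc[symmetric])
  show "(\<lambda>g. (cmod (\<xi> (- k + g)))\<^sup>2) summable_on UNIV"
    using summable_on_reindex_bij_betw[OF bij, of "\<lambda>g. (cmod (\<xi> g))\<^sup>2"] assms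
    by (simp add: l2_def)
  show "(\<Sum>\<^sub>\<infinity>g. (cmod (\<xi> (- k + g)))\<^sup>2) = (\<Sum>\<^sub>\<infinity>g. (cmod (\<xi> g))\<^sup>2)"
    using infsum_reindex_bij_betw[OF bij, of "\<lambda>g. (cmod (\<xi> g))\<^sup>2"] by simp
qed

lemma l2_sum_left_translates:
  fixes \<xi> :: "'a::group_add \<Rightarrow> complex"
  assumes "\<xi> \<in> l2" "finite F"
  shows "(\<lambda>g. \<Sum>k\<in>F. (cmod (\<xi> (- k + g)))\<^sup>2) summable_on UNIV \<and>
         (\<Sum>\<^sub>\<infinity>g. \<Sum>k\<in>F. (cmod (\<xi> (- k + g)))\<^sup>2) = card F * (\<Sum>\<^sub>\<infinity>g. (cmod (\<xi> g))\<^sup>2)"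
  using assms(2)
proof (induction F rule: finite_induct)
  case empty
  then show ?case by simp
next
  case (insert a F)
  note translate = l2_left_translate[OF assms(1), of a]
  have "(\<lambda>g. \<Sum>k\<in>insert a F. (cmod (\<xi> (- k + g)))\<^sup>2)
      = (\<lambda>g. (cmod (\<xi> (- a + g)))\<^sup>2 + (\<Sum>k\<in>F. (cmod (\<xi> (- k + g)))\<^sup>2))"
    using insert by auto
  then show ?case
    using summable_on_add[OF translate(1) insert.IH[THEN conjunct1]]
      infsum_add[OF translate(1) insert.IH[THEN conjunct1]] insert translate(2)
    by (simp add: algebra_simps)
qed

lemma norm_conv_sq_le:
  fixes x \<xi> :: "'a::group_add \<Rightarrow> complex"
  assumes "finite (supp x)"
  shows "(cmod (conv x \<xi> g))\<^sup>2
           \<le> (\<Sum>k\<in>supp x. cmod (x k))\<^sup>2 * (\<Sum>k\<in>supp x. (cmod (\<xi> (- k + g)))\<^sup>2)"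
proof -
  let ?F = "supp x"
  let ?R = "sqrt (\<Sum>k\<in>?F. (cmod (\<xi> (- k + g)))\<^sup>2)"
  have translate_le: "cmod (\<xi> (- k + g)) \<le> ?R" if "k \<in> ?F" for k
  proof -
    have "(cmod (\<xi> (- k + g)))\<^sup>2 \<le> (\<Sum>k\<in>?F. (cmod (\<xi> (- k + g)))\<^sup>2)"
      by (rule member_le_sum[OF that]) (auto simp: assms)
    then show ?thesis by (metis real_le_rsqrt)
  qed
  have "cmod (conv x \<xi> g) \<le> (\<Sum>k\<in>?F. cmod (x k) * cmod (\<xi> (- k + g)))"
    unfolding conv_def norm_mult[symmetric] by (rule norm_sum)
  also have "\<dots> \<le> (\<Sum>k\<in>?F. cmod (x k) * ?R)"
    by (intro sum_mono mult_left_mono translate_le) auto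
  also have "\<dots> = (\<Sum>k\<in>?F. cmod (x k)) * ?R"
    by (simp add: sum_distrib_right)
  finally have "(cmod (conv x \<xi> g))\<^sup>2 \<le> ((\<Sum>k\<in>?F. cmod (x k)) * ?R)\<^sup>2"
    by (intro power_mono) auto
  then show ?thesis
    by (simp add: power_mult_distrib sum_nonneg)
qed

lemma l2norm_conv_le:
  fixes x \<xi> :: "'a::group_add \<Rightarrow> complex"
  assumes "x \<in> groupring" "\<xi> \<in> l2"
  shows "l2norm (conv x \<xi>) \<le> (\<Sum>k\<in>supp x. cmod (x k)) * sqrt (card (supp x)) * l2norm \<xi>"
proof -
  let ?F = "supp x"
  let ?M = "(\<Sum>k\<in>?F. cmod (x k))\<^sup>2"
  have fin: "finite ?F" using assms(1) by (simp add: groupring_def)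
  note translates = l2_sum_left_translates[OF assms(2) fin]
  have dominant: "(\<lambda>g. ?M * (\<Sum>k\<in>?F. (cmod (\<xi> (- k + g)))\<^sup>2)) summable_on UNIV"
    using translates by (intro summable_on_cmult_right) blast
  have conv_summable: "(\<lambda>g. (cmod (conv x \<xi> g))\<^sup>2) summable_on UNIV"
    by (rule summable_on_comparison_test[OF dominant]) (auto intro: norm_conv_sq_le[OF fin])
  have "(\<Sum>\<^sub>\<infinity>g. (cmod (conv x \<xi> g))\<^sup>2) \<le> (\<Sum>\<^sub>\<infinity>g. ?M * (\<Sum>k\<in>?F. (cmod (\<xi> (- k + g)))\<^sup>2))"
    by (rule infsum_mono[OF conv_summable dominant]) (rule norm_conv_sq_le[OF fin])
  also have "\<dots> = ?M * card ?F * (\<Sum>\<^sub>\<infinity>g. (cmod (\<xi> g))\<^sup>2)"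
    using translates by (subst infsum_cmult_right) auto
  finally have "l2norm (conv x \<xi>) \<le> sqrt (?M * card ?F * (\<Sum>\<^sub>\<infinity>g. (cmod (\<xi> g))\<^sup>2))"
    unfolding l2norm_def by (rule real_sqrt_le_mono)
  then show ?thesis
    by (simp add: l2norm_def real_sqrt_mult sum_nonneg)
qed

text \<open>The bound above is needed: for an unbounded set the \<open>Sup\<close> in \<open>red_norm\<close> is an unspecified value.\<close>

lemma red_norm_nonneg:
  fixes x :: "'a::group_add \<Rightarrow> complex"
  assumes "x \<in> groupring"
  shows "red_norm x \<ge> 0"
proof -
  let ?B = "(\<Sum>k\<in>supp x. cmod (x k)) * sqrt (card (supp x))"
  have "l2norm (conv x \<xi>) \<le> ?B" if "\<xi> \<in> l2" "l2norm \<xi> \<le> 1" for \<xi>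
  proof -
    have "l2norm (conv x \<xi>) \<le> ?B * l2norm \<xi>"
      using l2norm_conv_le[OF assms that(1)] by simp
    also have "\<dots> \<le> ?B"
      using that(2) by (intro mult_left_le) (auto simp: sum_nonneg)
    finally show ?thesis .
  qed
  then have bdd: "bdd_above {l2norm (conv x \<xi>) | \<xi>. \<xi> \<in> l2 \<and> l2norm \<xi> \<le> 1}"
    by (auto intro!: bdd_aboveI[where M = ?B])
  have "conv x (\<lambda>g. 0) = (\<lambda>g. 0)" by (simp add: conv_def)
  then have "0 \<in> {l2norm (conv x \<xi>) | \<xi>. \<xi> \<in> l2 \<and> l2norm \<xi> \<le> 1}"
    by (auto simp: l2_def l2norm_def intro!: exI[where x = "\<lambda>g. 0"])
  then show ?thesis
    unfolding red_norm_def using bdd by (rule cSup_upper)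
qed

lemma supp_delta: "supp (delta a) = {a}"
  by (auto simp: supp_def delta_def)

lemma delta_in_groupring: "delta a \<in> groupring"
  by (simp add: groupring_def supp_delta)

lemma supp_indicator: "supp (indicator S :: 'a \<Rightarrow> complex) = S"
  by (auto simp: supp_def indicator_def)

lemma indicator_in_groupring: "finite S \<Longrightarrow> (indicator S :: 'a \<Rightarrow> complex) \<in> groupring"
  by (simp add: groupring_def supp_indicator)

lemma conv_delta_delta: "conv (delta a) (delta b) = delta (a + b :: 'a::group_add)"
  unfolding conv_def supp_delta
proof
  fix g
  have "(- a + g = b) = (g = a + b)"
    by (metis add_minus_cancel minus_add_cancel)
  then show "(\<Sum>k\<in>{a}. delta a k * delta b (- k + g)) = delta (a + b) g"
    by (simp add: delta_def)
qed

lemma bounded_trace_add: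
  "bounded_trace \<tau> \<Longrightarrow> x \<in> groupring \<Longrightarrow> y \<in> groupring \<Longrightarrow> \<tau> (\<lambda>g. x g + y g) = \<tau> x + \<tau> y"
  by (simp add: bounded_trace_def)

lemma bounded_trace_scale:
  "bounded_trace \<tau> \<Longrightarrow> x \<in> groupring \<Longrightarrow> \<tau> (\<lambda>g. c * x g) = c * \<tau> x"
  by (simp add: bounded_trace_def)

lemma bounded_trace_commute:
  "bounded_trace \<tau> \<Longrightarrow> x \<in> groupring \<Longrightarrow> y \<in> groupring \<Longrightarrow> \<tau> (conv x y) = \<tau> (conv y x)"
  by (simp add: bounded_trace_def)

lemma bounded_trace_conj:
  assumes "bounded_trace \<tau>"
  shows "\<tau> (delta (g + h + - g)) = \<tau> (delta (h :: 'a::group_add))"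
proof -
  have "\<tau> (conv (delta g) (delta (h + - g))) = \<tau> (conv (delta (h + - g)) (delta g))"
    by (rule bounded_trace_commute[OF assms delta_in_groupring delta_in_groupring])
  then show ?thesis by (simp add: conv_delta_delta add.assoc add_diff_eq)
qed

lemma bounded_trace_indicator:
  assumes "bounded_trace \<tau>" "finite S"
  shows "\<tau> (indicator S) = (\<Sum>k\<in>S. \<tau> (delta k))"
  using assms(2)
proof (induction S rule: finite_induct)
  case empty
  have "(\<lambda>g. 0::complex) \<in> groupring" by (simp add: groupring_def supp_def)
  from bounded_trace_scale[OF assms(1) this, of 0] show ?case by (simp add: indicator_def)
next
  case (insert a F)
  have "indicator (insert a F) = (\<lambda>g. delta a g + indicator F g)"
    using insert by (auto simp: indicator_def delta_def)
  moreover have "\<tau> (\<lambda>g. delta a g + indicator F g) = \<tau> (delta a) + \<tau> (indicator F)"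
    by (rule bounded_trace_add[OF assms(1) delta_in_groupring indicator_in_groupring[OF insert(1)]])
  ultimately show ?case using insert by simp
qed

lemma sobolev_norm_indicator_sphere:
  assumes "\<forall>g\<in>S. l g = m"
  shows "sobolev_norm l s (indicator S) = sqrt (card S) * (1 + real m) powr s"
proof -
  have "sobolev_norm l s (indicator S) = sqrt (\<Sum>g\<in>S. ((1 + real m) powr s)\<^sup>2)"
    unfolding sobolev_norm_def supp_indicator using assms
    by (intro arg_cong[where f = sqrt] sum.cong) (auto simp: power2_eq_square powr_add[symmetric])
  then show ?thesis by (simp add: real_sqrt_mult)
qed

lemma trace_le_sobolev_norm:
  assumes "property_RD l" "bounded_trace \<tau>"
  obtains D s where "D \<ge> 0" "\<And>x. x \<in> groupring \<Longrightarrow> cmod (\<tau> x) \<le> D * sobolev_norm l s x"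
proof -
  obtain C s where RD: "\<And>x. x \<in> groupring \<Longrightarrow> red_norm x \<le> C * sobolev_norm l s x"
    using assms(1) unfolding property_RD_def by blast
  obtain K where K: "\<forall>x\<in>groupring. cmod (\<tau> x) \<le> K * red_norm x"
    using assms(2) by (auto simp: bounded_trace_def)
  have "cmod (\<tau> x) \<le> (max K 0 * \<bar>C\<bar>) * sobolev_norm l s x" if x: "x \<in> groupring" for x
  proof -
    have "sobolev_norm l s x \<ge> 0"
      unfolding sobolev_norm_def by (intro real_sqrt_ge_zero sum_nonneg) auto
    then have "C * sobolev_norm l s x \<le> \<bar>C\<bar> * sobolev_norm l s x"
      by (intro mult_right_mono) auto
    have "cmod (\<tau> x) \<le> K * red_norm x"
      using K x by blast
    also have "\<dots> \<le> max K 0 * red_norm x"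
      using red_norm_nonneg[OF x] by (intro mult_right_mono) auto
    also have "\<dots> \<le> max K 0 * (\<bar>C\<bar> * sobolev_norm l s x)"
      using RD[OF x] \<open>C * sobolev_norm l s x \<le> \<bar>C\<bar> * sobolev_norm l s x\<close>
      by (intro mult_left_mono) auto
    finally show ?thesis by (simp only: mult.assoc)
  qed
  then show ?thesis by (intro that[of "max K 0 * \<bar>C\<bar>"]) auto
qed

lemma le_square_of_mult_le_sqrt:
  fixes n t D w :: real
  assumes "t > 0" "n * t \<le> D * sqrt n * w"
  shows "n \<le> (D / t)\<^sup>2 * w\<^sup>2"
proof (cases "n > 0")
  case True
  have "sqrt n * (sqrt n * t) \<le> sqrt n * (D * w)"
    using assms(2) True by (simp add: ac_simps)
  then have "sqrt n \<le> D * w / t"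
    using True assms(1) by (simp add: pos_le_divide_eq)
  then have "(sqrt n)\<^sup>2 \<le> (D * w / t)\<^sup>2"
    using True by (intro power_mono) auto
  then show ?thesis using True by (simp add: power_divide power_mult_distrib)
next
  case False
  then show ?thesis
    by (smt (verit) mult_nonneg_nonneg zero_le_power2)
qed

lemma powr_le_power_ceiling:
  fixes x a :: real
  assumes "x \<ge> 1"
  shows "x powr a \<le> x ^ nat \<lceil>a\<rceil>"
proof -
  have "x powr a \<le> x powr real (nat \<lceil>a\<rceil>)"
    using assms by (intro powr_mono) linarith+
  then show ?thesis using assms by (simp add: powr_realpow)
qed

lemma conj_class_spheres_polynomial_growth:
  fixes l :: "'a::group_add \<Rightarrow> nat"
  assumes "length_function l" "property_RD l" "bounded_trace \<tau>" "\<tau> (delta h) \<noteq> 0"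
  obtains E N where "\<And>m. real (card {g \<in> conj_class h. l g = m}) \<le> E * (1 + real m) ^ N"
proof -
  obtain D s where "D \<ge> 0" and trace_le: "\<And>x. x \<in> groupring \<Longrightarrow> cmod (\<tau> x) \<le> D * sobolev_norm l s x"
    using trace_le_sobolev_norm[OF assms(2,3)] by blast
  define t where "t = cmod (\<tau> (delta h))"
  have "t > 0" using assms(4) by (simp add: t_def)
  have "real (card S) \<le> (D / t)\<^sup>2 * (1 + real m) ^ nat \<lceil>2 * s\<rceil>"
    if S_def: "S = {g \<in> conj_class h. l g = m}" for S m
  proof -
    have "finite (l -` {m})" using assms(1) unfolding length_function_def by blast
    then have "finite S" by (rule finite_subset[rotated]) (auto simp: S_def)
    have "\<tau> (delta k) = \<tau> (delta h)" if "k \<in> S" for k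
      using that bounded_trace_conj[OF assms(3)] by (auto simp: S_def conj_class_def)
    then have "\<tau> (indicator S) = of_nat (card S) * \<tau> (delta h)"
      using bounded_trace_indicator[OF assms(3) \<open>finite S\<close>] by simp
    then have "real (card S) * t = cmod (\<tau> (indicator S))" by (simp add: t_def norm_mult)
    also have "\<dots> \<le> D * (sqrt (card S) * (1 + real m) powr s)"
      using trace_le[OF indicator_in_groupring[OF \<open>finite S\<close>]] sobolev_norm_indicator_sphere[of S l m s]
      by (simp add: S_def)
    finally have "real (card S) \<le> (D / t)\<^sup>2 * ((1 + real m) powr s)\<^sup>2"
      using \<open>t > 0\<close> by (intro le_square_of_mult_le_sqrt) (auto simp: mult.assoc)
    also have "((1 + real m) powr s)\<^sup>2 \<le> (1 + real m) ^ nat \<lceil>2 * s\<rceil>"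
      using powr_le_power_ceiling[of "1 + real m" "2 * s"]
      by (simp add: power2_eq_square powr_add[symmetric])
    finally show ?thesis by (simp add: mult_left_mono)
  qed
  then show ?thesis using that by blast
qed

theorem mainTheorem5:
  fixes l :: "'a::group_add \<Rightarrow> nat" and h :: 'a
  assumes "length_function l"
    and "property_RD l"
    and "\<forall>P :: real poly. infinite {m::nat. real (card {g \<in> conj_class h. l g = m}) > poly P (real m)}"
    and "bounded_trace \<tau>"
  shows "\<tau> (delta h) = 0"
proof (rule ccontr)
  assume "\<tau> (delta h) \<noteq> 0"
  then obtain E N where growth: "\<And>m. real (card {g \<in> conj_class h. l g = m}) \<le> E * (1 + real m) ^ N"
    using conj_class_spheres_polynomial_growth assms(1,2,4) by blast
  define P where "P = smult E ([:1, 1:] ^ N)"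
  have "poly P (real m) = E * (1 + real m) ^ N" for m
    by (simp add: P_def)
  then have "{m::nat. real (card {g \<in> conj_class h. l g = m}) > poly P (real m)} = {}"
    using growth by (auto simp: not_less)
  then show False using assms(3) by (metis finite.emptyI)
qed

end
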